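(* For every formula with placeholders $\varphi$ and every formula $\psi$: $\varphi[\mathbf{GF}\psi] \equiv (\mathbf{GF}\psi \wedge \varphi[\mathbf{true}]) \vee \varphi[\mathbf{false}]$ and $\varphi[\mathbf{FG}\psi] \equiv (\mathbf{FG}\psi \wedge \varphi[\mathbf{true}]) \vee \varphi[\mathbf{false}]$.
   Context: Fix a finite set $Ap$ of atomic propositions. A word is an infinite sequence $w = w[0]w[1]\dots$ of letters of $2^{Ap}$, and $w_i$ denotes the suffix $w[i]w[i+1]\dots$. Formulas are generated by $\varphi ::= \mathbf{true} \mid \mathbf{false} \mid a \mid \neg a \mid \varphi\wedge\varphi \mid \varphi\vee\varphi \mid \mathbf{X}\varphi \mid \varphi\,\mathbf{U}\,\varphi \mid \varphi\,\mathbf{W}\,\varphi \mid \mathbf{GF}\varphi \mid \mathbf{FG}\varphi$ ($a\in Ap$), where $\mathbf{GF}$, $\mathbf{FG}$ are single unary operators. Semantics: $w\models a$ iff $a\in w[0]$, $w\models\neg a$ iff $a\notin w[0]$, Boolean constants and connectives as usual; $w\models\mathbf{X}\varphi$ iff $w_1\models\varphi$; $w\models\varphi\mathbf{U}\psi$ iff $\exists k$: $w_k\models\psi$ and $\forall j<k$: $w_j\models\varphi$; $w\models\varphi\mathbf{W}\psi$ iff ($\forall k$: $w_k\models\varphi$) or $w\models\varphi\mathbf{U}\psi$; $w\models\mathbf{GF}\varphi$ iff $w_k\models\varphi$ for infinitely many $k$; $w\models\mathbf{FG}\varphi$ iff $\exists n\,\forall k\geq n$: $w_k\models\varphi$. $\varphi\equiv\psi$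 means both formulas are satisfied by exactly the same words. A formula with placeholders is a formula over $Ap\cup\{\star\}$, where $\star$ is a special fresh atomic proposition, with at least one occurrence of $\star$ and no occurrence of $\neg\star$; for such $\varphi$ and a formula $\psi$, $\varphi[\psi]$ denotes the result of substituting $\psi$ for every occurrence of $\star$. *)

theory Defs
  imports Main
begin

datatype 'a ltl =
    LTrue
  | LFalse
  | Prop 'a
  | NProp 'a
  | And "'a ltl" "'a ltl"
  | Or "'a ltl" "'a ltl"
  | Next "'a ltl"
  | Until "'a ltl" "'a ltl"
  | WeakUntil "'a ltl" "'a ltl"
  | GF "'a ltl"
  | FG "'a ltl"

type_synonym 'a word = "nat \<Rightarrow> 'a set"

definition suffix :: "nat \<Rightarrow> 'a word \<Rightarrow> 'a word" where
  "suffix i w = (\<lambda>k. w (k + i))"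

fun models :: "'a word \<Rightarrow> 'a ltl \<Rightarrow> bool" where
  "models w LTrue = True"
| "models w LFalse = False"
| "models w (Prop a) = (a \<in> w 0)"
| "models w (NProp a) = (a \<notin> w 0)"
| "models w (And \<phi> \<psi>) = (models w \<phi> \<and> models w \<psi>)"
| "models w (Or \<phi> \<psi>) = (models w \<phi> \<or> models w \<psi>)"
| "models w (Next \<phi>) = models (suffix 1 w) \<phi>"
| "models w (Until \<phi> \<psi>) =
     (\<exists>k. models (suffix k w) \<psi> \<and> (\<forall>j<k. models (suffix j w) \<phi>))"
| "models w (WeakUntil \<phi> \<psi>) =
     ((\<forall>k. models (suffix k w) \<phi>) \<or>
      (\<exists>k. models (suffix k w) \<psi> \<and> (\<forall>j<k. models (suffix j w) \<phi>)))"
| "models w (GF \<phi>) = infinite {k. models (suffix k w) \<phi>}"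
| "models w (FG \<phi>) = (\<exists>n. \<forall>k\<ge>n. models (suffix k w) \<phi>)"

definition equiv_ltl :: "'a ltl \<Rightarrow> 'a ltl \<Rightarrow> bool" where
  "equiv_ltl \<phi> \<psi> = (\<forall>w. models w \<phi> = models w \<psi>)"

text \<open>Formulas with placeholders: formulas over atoms 'a option, where None is the
  placeholder atom (star).\<close>

fun atoms :: "'a ltl \<Rightarrow> 'a set" where
  "atoms LTrue = {}"
| "atoms LFalse = {}"
| "atoms (Prop a) = {a}"
| "atoms (NProp a) = {}"
| "atoms (And \<phi> \<psi>) = atoms \<phi> \<union> atoms \<psi>"
| "atoms (Or \<phi> \<psi>) = atoms \<phi> \<union> atoms \<psi>"
| "atoms (Next \<phi>) = atoms \<phi>"
| "atoms (Until \<phi> \<psi>) = atoms \<phi> \<union> atoms \<psi>"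
| "atoms (WeakUntil \<phi> \<psi>) = atoms \<phi> \<union> atoms \<psi>"
| "atoms (GF \<phi>) = atoms \<phi>"
| "atoms (FG \<phi>) = atoms \<phi>"

fun natoms :: "'a ltl \<Rightarrow> 'a set" where
  "natoms LTrue = {}"
| "natoms LFalse = {}"
| "natoms (Prop a) = {}"
| "natoms (NProp a) = {a}"
| "natoms (And \<phi> \<psi>) = natoms \<phi> \<union> natoms \<psi>"
| "natoms (Or \<phi> \<psi>) = natoms \<phi> \<union> natoms \<psi>"
| "natoms (Next \<phi>) = natoms \<phi>"
| "natoms (Until \<phi> \<psi>) = natoms \<phi> \<union> natoms \<psi>"
| "natoms (WeakUntil \<phi> \<psi>) = natoms \<phi> \<union> natoms \<psi>"
| "natoms (GF \<phi>) = natoms \<phi>"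
| "natoms (FG \<phi>) = natoms \<phi>"

definition is_placeholder_formula :: "'a option ltl \<Rightarrow> bool" where
  "is_placeholder_formula \<phi> = (None \<in> atoms \<phi> \<and> None \<notin> natoms \<phi>)"

fun subst :: "'a option ltl \<Rightarrow> 'a ltl \<Rightarrow> 'a ltl" where
  "subst LTrue \<psi> = LTrue"
| "subst LFalse \<psi> = LFalse"
| "subst (Prop None) \<psi> = \<psi>"
| "subst (Prop (Some a)) \<psi> = Prop a"
| "subst (NProp None) \<psi> = LTrue" \<comment> \<open>never used: placeholder formulas contain no negated star\<close>
| "subst (NProp (Some a)) \<psi> = NProp a"
| "subst (And \<phi>1 \<phi>2) \<psi> = And (subst \<phi>1 \<psi>) (subst \<phi>2 \<psi>)"
| "subst (Or \<phi>1 \<phi>2) \<psi> = Or (subst \<phi>1 \<psi>) (subst \<phi>2 \<psi>)"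
| "subst (Next \<phi>) \<psi> = Next (subst \<phi> \<psi>)"
| "subst (Until \<phi>1 \<phi>2) \<psi> = Until (subst \<phi>1 \<psi>) (subst \<phi>2 \<psi>)"
| "subst (WeakUntil \<phi>1 \<phi>2) \<psi> = WeakUntil (subst \<phi>1 \<psi>) (subst \<phi>2 \<psi>)"
| "subst (GF \<phi>) \<psi> = GF (subst \<phi> \<psi>)"
| "subst (FG \<phi>) \<psi> = FG (subst \<phi> \<psi>)"

end

theory Submission
  imports Defs
begin

text \<open>\<^bold>\<open>GF\<close>\<psi> and \<^bold>\<open>FG\<close>\<psi> are prefix independent: their truth value is the same on every
  suffix of a word. On a fixed word w, every occurrence of the placeholder in \<phi>[\<^bold>\<open>GF\<close>\<psi>] is
  therefore evaluated on a suffix of w, where it has the same value as \<^bold>\<open>GF\<close>\<psi> on w, so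
  \<phi>[\<^bold>\<open>GF\<close>\<psi>] agrees on w with \<phi>[true] or with \<phi>[false], and likewise for \<^bold>\<open>FG\<close>\<psi>.
  Since the placeholder occurs only positively, \<phi>[false] implies \<phi>[true], which yields
  the stated disjunction.\<close>

lemma suffix_0 [simp]: "suffix 0 w = w"
  by (simp add: suffix_def)

lemma suffix_suffix [simp]: "suffix k (suffix m w) = suffix (k + m) w"
  by (simp add: suffix_def add.assoc)

definition prefix_independent :: "'a ltl \<Rightarrow> bool" where
  "prefix_independent \<chi> \<longleftrightarrow> (\<forall>i w. models (suffix i w) \<chi> = models w \<chi>)"

lemma models_FG_iff_eventually:
  "models w (FG \<psi>) \<longleftrightarrow> eventually (\<lambda>k. models (suffix k w) \<psi>) sequentially"
  by (simp add: eventually_sequentially)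

lemma models_GF_iff_frequently:
  "models w (GF \<psi>) \<longleftrightarrow> frequently (\<lambda>k. models (suffix k w) \<psi>) sequentially"
  by (simp add: frequently_cofinite flip: cofinite_eq_sequentially)

lemma prefix_independent_FG: "prefix_independent (FG \<psi>)"
  unfolding prefix_independent_def models_FG_iff_eventually
  using eventually_sequentially_seg[where P = "\<lambda>k. models (suffix k _) \<psi>"] by simp

lemma prefix_independent_GF: "prefix_independent (GF \<psi>)"
  unfolding prefix_independent_def models_GF_iff_frequently frequently_def
  using eventually_sequentially_seg[where P = "\<lambda>k. \<not> models (suffix k _) \<psi>"] by simp

lemma models_subst_cong:
  assumes "\<forall>k. models (suffix k w) \<chi> = models (suffix k w) \<chi>'"
  shows "models w (subst \<phi> \<chi>) = models w (subst \<phi> \<chi>')"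
  using assms
proof (induction \<phi> arbitrary: w)
  case (Prop x)
  then show ?case by (cases x) (auto dest: spec[of _ 0])
next
  case (NProp x)
  then show ?case by (cases x) auto
qed (simp_all add: add.assoc[symmetric])

lemma models_subst_mono:
  assumes "\<And>v. models v \<chi> \<Longrightarrow> models v \<chi>'"
    and "models w (subst \<phi> \<chi>)"
  shows "models w (subst \<phi> \<chi>')"
  using assms(2)
proof (induction \<phi> arbitrary: w)
  case (Prop x)
  then show ?case using assms(1) by (cases x) auto
next
  case (NProp x)
  then show ?case by (cases x) auto
next
  case (Until \<phi>1 \<phi>2)
  then show ?case by simp blast
next
  case (WeakUntil \<phi>1 \<phi>2)
  then show ?case by simp blast
next
  case (GF \<phi>)
  then have "{k. models (suffix k w) (subst \<phi> \<chi>)} \<subseteq> {k. models (suffix k w) (subst \<phi> \<chi>')}"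
    by blast
  with GF.prems show ?case by (auto dest: finite_subset)
next
  case (FG \<phi>)
  then show ?case by simp blast
qed auto

lemma subst_prefix_independent_equiv:
  assumes "prefix_independent \<chi>"
  shows "equiv_ltl (subst \<phi> \<chi>) (Or (And \<chi> (subst \<phi> LTrue)) (subst \<phi> LFalse))"
  unfolding equiv_ltl_def
proof
  fix w
  have false_imp_true: "models w (subst \<phi> LFalse) \<Longrightarrow> models w (subst \<phi> LTrue)"
    by (rule models_subst_mono) auto
  have "models w (subst \<phi> \<chi>) = models w (subst \<phi> (if models w \<chi> then LTrue else LFalse))"
    using assms by (intro models_subst_cong) (simp add: prefix_independent_def)
  then show "models w (subst \<phi> \<chi>) = models w (Or (And \<chi> (subst \<phi> LTrue)) (subst \<phi> LFalse))"
    using false_imp_true by auto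
qed

theorem lemma2:
  fixes \<phi> :: "'a option ltl" and \<psi> :: "'a ltl"
  assumes "is_placeholder_formula \<phi>"
  shows "equiv_ltl (subst \<phi> (GF \<psi>)) (Or (And (GF \<psi>) (subst \<phi> LTrue)) (subst \<phi> LFalse))
       \<and> equiv_ltl (subst \<phi> (FG \<psi>)) (Or (And (FG \<psi>) (subst \<phi> LTrue)) (subst \<phi> LFalse))"
  using subst_prefix_independent_equiv[OF prefix_independent_GF]
    subst_prefix_independent_equiv[OF prefix_independent_FG]
  by blast

end
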